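(* Suppose there is a sequence of positive numbers $(c_N)_{N\ge1}$ with $\lim_{N\to\infty}c_N^{1/N}=1$ such that for every $N\in\mathbb N$ and all origin-symmetric convex sets $K,T\subseteq\mathbb R^N$, \[ \gamma_N(K+T)\,\gamma_N(K\cap T)\ge c_N\,\gamma_N(K)\,\gamma_N(T). \] Then for every $d\ge1$ and all origin-symmetric convex sets $K,T\subseteq\mathbb R^d$, \[ \gamma_d(K+T)\,\gamma_d(K\cap T)\ge \gamma_d(K)\,\gamma_d(T). \]
   Context: $\gamma_m$ denotes the standard Gaussian probability measure on $\mathbb R^m$, with density proportional to $e^{-\|x\|^2/2}$. $K+T=\{x+y:x\in K,\ y\in T\}$ is the Minkowski sum. A set $K$ is origin-symmetric if $K=-K$. *)

theory Defs
  imports "HOL-Probability.Probability"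
begin

text \<open>Points of R^N are represented as extensional functions on the index set {..<N}
  (elements of PiE {..<N} (\<lambda>_. UNIV)), the carrier of the product measure.\<close>

definition RN :: "nat \<Rightarrow> (nat \<Rightarrow> real) set" where
  "RN N = PiE {..<N} (\<lambda>_. UNIV)"

text \<open>Standard Gaussian measure on R^N: product of N standard normal distributions,
  completed (so that all convex sets, being Lebesgue measurable, are measurable).\<close>

definition gauss :: "nat \<Rightarrow> (nat \<Rightarrow> real) measure" where
  "gauss N = completion (PiM {..<N} (\<lambda>_. density lborel std_normal_density))"

definition gamma :: "nat \<Rightarrow> (nat \<Rightarrow> real) set \<Rightarrow> real" where
  "gamma N A = measure (gauss N) A"

definition minkowski_sum :: "nat \<Rightarrow> (nat \<Rightarrow> real) set \<Rightarrow> (nat \<Rightarrow> real) set \<Rightarrow> (nat \<Rightarrow> real) set" where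
  "minkowski_sum N K T = {(\<lambda>i\<in>{..<N}. x i + y i) | x y. x \<in> K \<and> y \<in> T}"

definition convex_set :: "nat \<Rightarrow> (nat \<Rightarrow> real) set \<Rightarrow> bool" where
  "convex_set N K \<longleftrightarrow> K \<subseteq> RN N \<and>
     (\<forall>x\<in>K. \<forall>y\<in>K. \<forall>u::real. 0 \<le> u \<and> u \<le> 1 \<longrightarrow>
        (\<lambda>i\<in>{..<N}. (1 - u) * x i + u * y i) \<in> K)"

definition origin_symmetric :: "nat \<Rightarrow> (nat \<Rightarrow> real) set \<Rightarrow> bool" where
  "origin_symmetric N K \<longleftrightarrow> K \<subseteq> RN N \<and> (\<forall>x\<in>K. (\<lambda>i\<in>{..<N}. - x i) \<in> K)"

end

theory Submission
  imports Defs
begin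

text \<open>Tensorisation. For a symmetric convex set A in R^n let A^2 in R^(2n) be the set of points
  both of whose halves lie in A. It is again symmetric and convex, gamma_2n(A^2) = gamma_n(A)^2,
  and squaring commutes with intersections and Minkowski sums. Applying the hypothesis in
  dimension 2^k d to the k-fold squares of K and T therefore gives X^(2^k) \<ge> c(2^k d) Q^(2^k),
  where X and Q are the two sides of the inequality. Taking 2^k-th roots and letting k \<rightarrow> \<infinity>
  removes the constant, because c(2^k d)^(1/2^k) = (c(N)^(1/N))^d \<rightarrow> 1 along N = 2^k d.\<close>

lemma completion_sandwich:
  assumes S: "S \<in> sets M" and null: "C - S \<in> null_sets M" and "S \<subseteq> A" "A \<subseteq> C"
  shows "A \<in> sets (completion M)" and "emeasure (completion M) A = emeasure M S"
proof -
  have C_eq: "C = S \<union> (C - S)" using \<open>S \<subseteq> A\<close> \<open>A \<subseteq> C\<close> by auto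
  then have C: "C \<in> sets M" using S null by (metis null_setsD2 sets.Un)
  show A: "A \<in> sets (completion M)"
    using S null \<open>S \<subseteq> A\<close> \<open>A \<subseteq> C\<close> by (intro sets_completionI[of A S "A - S" "C - S"]) auto
  have "emeasure M S \<le> emeasure (completion M) A"
    using emeasure_mono[OF \<open>S \<subseteq> A\<close> A] S by simp
  moreover have "emeasure (completion M) A \<le> emeasure M C"
    using emeasure_mono[OF \<open>A \<subseteq> C\<close>, of "completion M"] C by simp
  moreover have "emeasure M C = emeasure M S"
    using emeasure_Un_null_set[OF S null] C_eq by simp
  ultimately show "emeasure (completion M) A = emeasure M S" by simp
qed

abbreviation gauss1 :: "real measure" where
  "gauss1 \<equiv> density lborel std_normal_density"

abbreviation gauss_prod :: "nat \<Rightarrow> (nat \<Rightarrow> real) measure" where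
  "gauss_prod n \<equiv> PiM {..<n} (\<lambda>_. gauss1)"

lemma prob_space_gauss1: "prob_space gauss1"
  using prob_space_normal_density[of 1 0] by simp

interpretation gauss1: product_sigma_finite "\<lambda>_::nat. gauss1"
  by (simp add: product_sigma_finite_def prob_space_imp_sigma_finite prob_space_gauss1)

lemma prob_space_gauss_prod: "prob_space (gauss_prod n)"
  by (rule prob_space_PiM) (simp add: prob_space_gauss1)

lemma space_gauss_prod: "space (gauss_prod n) = RN n"
  by (simp add: space_PiM RN_def)

lemma gauss_eq_completion: "gauss n = completion (gauss_prod n)"
  by (simp add: gauss_def)

subsection \<open>Splitting R^2n into two halves\<close>

definition split_coords :: "nat \<Rightarrow> (nat \<Rightarrow> real) \<Rightarrow> (nat \<Rightarrow> real) \<times> (nat \<Rightarrow> real)" where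
  "split_coords n z = (restrict z {..<n}, \<lambda>i\<in>{..<n}. z (i + n))"

definition join_coords :: "nat \<Rightarrow> (nat \<Rightarrow> real) \<times> (nat \<Rightarrow> real) \<Rightarrow> (nat \<Rightarrow> real)" where
  "join_coords n p = (\<lambda>i\<in>{..<2*n}. if i < n then fst p i else snd p (i - n))"

lemma join_coords_RN: "join_coords n p \<in> RN (2*n)"
  by (simp add: join_coords_def RN_def)

lemma split_join_coords: "x \<in> RN n \<Longrightarrow> y \<in> RN n \<Longrightarrow> split_coords n (join_coords n (x, y)) = (x, y)"
  by (auto simp: split_coords_def join_coords_def RN_def PiE_iff extensional_def fun_eq_iff)

lemma split_coords_inj_on: "inj_on (split_coords n) (RN (2*n))"
proof (rule inj_onI)
  fix z w assume z: "z \<in> RN (2*n)" and w: "w \<in> RN (2*n)" and eq: "split_coords n z = split_coords n w"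
  show "z = w"
  proof
    fix i
    show "z i = w i"
    proof (cases "i < n" "i < 2*n" rule: case_split[case_product case_split])
      case False_True
      then have "i - n < n" by simp
      then have "z ((i - n) + n) = w ((i - n) + n)"
        using eq by (simp add: split_coords_def fun_eq_iff) (metis (no_types, lifting))
      with False_True show ?thesis by simp
    qed (use eq z w in \<open>auto simp: split_coords_def fun_eq_iff RN_def PiE_iff extensional_def
                             dest: spec[of _ i]\<close>)
  qed
qed

lemma split_coords_pointwise:
  "split_coords n (\<lambda>i\<in>{..<2*n}. f (x i) (y i)) =
    ((\<lambda>i\<in>{..<n}. f (fst (split_coords n x) i) (fst (split_coords n y) i)),
     (\<lambda>i\<in>{..<n}. f (snd (split_coords n x) i) (snd (split_coords n y) i)))"
  by (auto simp: split_coords_def fun_eq_iff)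

lemma split_coords_measurable: "split_coords n \<in> gauss_prod (2*n) \<rightarrow>\<^sub>M gauss_prod n \<Otimes>\<^sub>M gauss_prod n"
  unfolding split_coords_def
  by (intro measurable_Pair measurable_restrict) (auto intro!: measurable_component_singleton)

lemma join_coords_measurable: "join_coords n \<in> gauss_prod n \<Otimes>\<^sub>M gauss_prod n \<rightarrow>\<^sub>M gauss_prod (2*n)"
  unfolding join_coords_def
proof (rule measurable_restrict)
  fix i assume "i \<in> {..<2*n}"
  then show "(\<lambda>p. if i < n then fst p i else snd p (i - n)) \<in> gauss_prod n \<Otimes>\<^sub>M gauss_prod n \<rightarrow>\<^sub>M gauss1"
    by (cases "i < n") (simp_all, measurable)
qed

lemma all_less_double_iff: "(\<forall>i<2*(n::nat). P i) \<longleftrightarrow> (\<forall>i<n. P i) \<and> (\<forall>i<n. P (i + n))"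
proof safe
  fix i assume "\<forall>i<n. P i" "\<forall>i<n. P (i + n)" "i < 2*n"
  then show "P i" by (cases "i < n") (auto dest: spec[of _ "i - n"])
qed auto

lemma PiE_double_iff:
  "z \<in> RN (2*n) \<Longrightarrow> z \<in> PiE {..<2*n} A \<longleftrightarrow>
     fst (split_coords n z) \<in> PiE {..<n} A \<and> snd (split_coords n z) \<in> PiE {..<n} (\<lambda>i. A (i + n))"
  using all_less_double_iff[of n "\<lambda>i. z i \<in> A i"]
  by (simp add: split_coords_def RN_def PiE_iff lessThan_iff Ball_def)

lemma distr_join_coords: "distr (gauss_prod n \<Otimes>\<^sub>M gauss_prod n) (gauss_prod (2*n)) (join_coords n) = gauss_prod (2*n)"
proof (rule gauss1.PiM_eqI)
  interpret prob_space "gauss_prod n" by (rule prob_space_gauss_prod)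
  fix A assume A: "\<And>i. i \<in> {..<2*n} \<Longrightarrow> A i \<in> sets gauss1"
  let ?Q = "\<lambda>i. A (i + n)"
  have vimage: "join_coords n -` PiE {..<2*n} A \<inter> space (gauss_prod n \<Otimes>\<^sub>M gauss_prod n) = PiE {..<n} A \<times> PiE {..<n} ?Q"
  proof (rule set_eqI)
    fix p :: "(nat \<Rightarrow> real) \<times> (nat \<Rightarrow> real)"
    obtain x y where p: "p = (x, y)" by fastforce
    have PiE_RN: "PiE {..<n} B \<subseteq> RN n" for B by (auto simp: RN_def)
    have "join_coords n (x, y) \<in> PiE {..<2*n} A \<and> x \<in> RN n \<and> y \<in> RN n \<longleftrightarrow>
          x \<in> PiE {..<n} A \<and> y \<in> PiE {..<n} ?Q"
    proof (cases "x \<in> RN n \<and> y \<in> RN n")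
      case True
      then show ?thesis
        using PiE_double_iff[OF join_coords_RN, of n "(x, y)" A] split_join_coords[of x n y] by simp
    qed (use PiE_RN in blast)
    then show "p \<in> join_coords n -` PiE {..<2*n} A \<inter> space (gauss_prod n \<Otimes>\<^sub>M gauss_prod n) \<longleftrightarrow>
               p \<in> PiE {..<n} A \<times> PiE {..<n} ?Q"
      by (simp add: p space_pair_measure space_gauss_prod)
  qed
  have "emeasure (distr (gauss_prod n \<Otimes>\<^sub>M gauss_prod n) (gauss_prod (2*n)) (join_coords n)) (PiE {..<2*n} A)
      = emeasure (gauss_prod n) (PiE {..<n} A) * emeasure (gauss_prod n) (PiE {..<n} ?Q)"
    using join_coords_measurable A
    by (simp add: emeasure_distr sets_PiM_I_finite vimage emeasure_pair_measure_Times)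
  also have "\<dots> = (\<Prod>i<n. emeasure gauss1 (A i)) * (\<Prod>i<n. emeasure gauss1 (?Q i))"
  proof -
    have "emeasure (gauss_prod n) (PiE {..<n} A) = (\<Prod>i<n. emeasure gauss1 (A i))"
         "emeasure (gauss_prod n) (PiE {..<n} ?Q) = (\<Prod>i<n. emeasure gauss1 (?Q i))"
      using A by (auto intro!: gauss1.emeasure_PiM)
    then show ?thesis by simp
  qed
  also have "\<dots> = (\<Prod>i<2*n. emeasure gauss1 (A i))"
    using prod.atLeastLessThan_shift_bounds[of "\<lambda>i. emeasure gauss1 (A i)" 0 n n]
          prod.atLeastLessThan_concat[of 0 n "2*n" "\<lambda>i. emeasure gauss1 (A i)"]
    by (simp add: lessThan_atLeast0 mult_2 comp_def add.commute)
  finally show "emeasure (distr (gauss_prod n \<Otimes>\<^sub>M gauss_prod n) (gauss_prod (2*n)) (join_coords n)) (PiE {..<2*n} A)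
      = (\<Prod>i<2*n. emeasure gauss1 (A i))" .
qed simp_all

subsection \<open>The square of a set\<close>

definition square_set :: "nat \<Rightarrow> (nat \<Rightarrow> real) set \<Rightarrow> (nat \<Rightarrow> real) set" where
  "square_set n A = {z \<in> RN (2*n). split_coords n z \<in> A \<times> A}"

lemma square_set_RN: "square_set n A \<subseteq> RN (2*n)"
  by (auto simp: square_set_def)

lemma square_set_mono: "A \<subseteq> B \<Longrightarrow> square_set n A \<subseteq> square_set n B"
  by (auto simp: square_set_def)

lemma square_set_Int: "square_set n (A \<inter> B) = square_set n A \<inter> square_set n B"
  by (auto simp: square_set_def)

lemma sets_square_set: "B \<in> sets (gauss_prod n) \<Longrightarrow> square_set n B \<in> sets (gauss_prod (2*n))"
proof -
  assume B: "B \<in> sets (gauss_prod n)"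
  have "square_set n B = split_coords n -` (B \<times> B) \<inter> space (gauss_prod (2*n))"
    by (auto simp: square_set_def space_gauss_prod)
  also have "\<dots> \<in> sets (gauss_prod (2*n))"
    by (rule measurable_sets[OF split_coords_measurable]) (simp add: B pair_measureI)
  finally show ?thesis .
qed

lemma emeasure_square_set:
  assumes B: "B \<in> sets (gauss_prod n)"
  shows "emeasure (gauss_prod (2*n)) (square_set n B) = emeasure (gauss_prod n) B ^ 2"
proof -
  interpret prob_space "gauss_prod n" by (rule prob_space_gauss_prod)
  have B_RN: "B \<subseteq> RN n" using sets.sets_into_space[OF B] by (simp add: space_gauss_prod)
  have vimage: "join_coords n -` square_set n B \<inter> space (gauss_prod n \<Otimes>\<^sub>M gauss_prod n) = B \<times> B"
    using B_RN join_coords_RN split_join_coords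
    by (fastforce simp: square_set_def space_pair_measure space_gauss_prod)
  have "emeasure (gauss_prod (2*n)) (square_set n B)
      = emeasure (distr (gauss_prod n \<Otimes>\<^sub>M gauss_prod n) (gauss_prod (2*n)) (join_coords n)) (square_set n B)"
    by (simp add: distr_join_coords)
  also have "\<dots> = emeasure (gauss_prod n \<Otimes>\<^sub>M gauss_prod n) (B \<times> B)"
    using join_coords_measurable sets_square_set[OF B] by (simp add: emeasure_distr vimage)
  also have "\<dots> = emeasure (gauss_prod n) B ^ 2"
    using B by (simp add: emeasure_pair_measure_Times power2_eq_square)
  finally show ?thesis .
qed

lemma
  assumes A: "A \<in> sets (gauss n)"
  shows sets_gauss_square_set: "square_set n A \<in> sets (gauss (2*n))"
    and emeasure_gauss_square_set: "emeasure (gauss (2*n)) (square_set n A) = emeasure (gauss n) A ^ 2"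
proof -
  interpret prob_space "gauss_prod (2*n)" by (rule prob_space_gauss_prod)
  have A': "A \<in> sets (completion (gauss_prod n))" using A by (simp add: gauss_eq_completion)
  obtain C where C: "C \<in> sets (gauss_prod n)" "A \<subseteq> C" "emeasure (gauss n) A = emeasure (gauss_prod n) C"
    using completion_upper[OF A'] by (auto simp: gauss_eq_completion)
  define S where "S = main_part (gauss_prod n) A"
  have "S \<subseteq> A"
    using main_part_null_part_Un[OF A'] unfolding S_def by blast
  then have S: "S \<in> sets (gauss_prod n)" "S \<subseteq> A" "emeasure (gauss n) A = emeasure (gauss_prod n) S"
    using A' by (simp_all add: S_def gauss_eq_completion)
  have null: "square_set n C - square_set n S \<in> null_sets (gauss_prod (2*n))"
  proof -
    have "emeasure (gauss_prod (2*n)) (square_set n C - square_set n S)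
        = emeasure (gauss_prod (2*n)) (square_set n C) - emeasure (gauss_prod (2*n)) (square_set n S)"
      using S C by (intro emeasure_Diff sets_square_set square_set_mono) auto
    also have "\<dots> = 0"
      using S(3) C(3) emeasure_finite[of "square_set n S"] by (simp add: emeasure_square_set S(1) C(1))
    finally show ?thesis using S(1) C(1) by (auto intro: sets_square_set)
  qed
  note sandwich = completion_sandwich[OF sets_square_set[OF S(1)] null
                    square_set_mono[OF S(2)] square_set_mono[OF C(2)]]
  show "square_set n A \<in> sets (gauss (2*n))"
    using sandwich(1) by (simp add: gauss_eq_completion)
  show "emeasure (gauss (2*n)) (square_set n A) = emeasure (gauss n) A ^ 2"
    using sandwich(2) S by (simp add: gauss_eq_completion emeasure_square_set)
qed

lemma convex_set_square_set:
  assumes "convex_set n A"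
  shows "convex_set (2*n) (square_set n A)"
  unfolding convex_set_def
proof (intro conjI ballI allI impI)
  fix x y and u :: real
  assume "x \<in> square_set n A" "y \<in> square_set n A" "0 \<le> u \<and> u \<le> 1"
  then show "(\<lambda>i\<in>{..<2*n}. (1 - u) * x i + u * y i) \<in> square_set n A"
    using assms split_coords_pointwise[of n "\<lambda>a b. (1 - u) * a + u * b" x y]
    by (auto simp: square_set_def convex_set_def RN_def mem_Times_iff)
qed (rule square_set_RN)

lemma origin_symmetric_square_set:
  assumes "origin_symmetric n A"
  shows "origin_symmetric (2*n) (square_set n A)"
  unfolding origin_symmetric_def
proof (intro conjI ballI)
  fix x assume "x \<in> square_set n A"
  then show "(\<lambda>i\<in>{..<2*n}. - x i) \<in> square_set n A"
    using assms split_coords_pointwise[of n "\<lambda>a b. - a" x x]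
    by (auto simp: square_set_def origin_symmetric_def RN_def mem_Times_iff)
qed (rule square_set_RN)

lemma minkowski_sum_square_set:
  assumes A: "A \<subseteq> RN n" and B: "B \<subseteq> RN n"
  shows "minkowski_sum (2*n) (square_set n A) (square_set n B) = square_set n (minkowski_sum n A B)"
proof (intro equalityI subsetI)
  fix z assume "z \<in> minkowski_sum (2*n) (square_set n A) (square_set n B)"
  then obtain x y where z: "z = (\<lambda>i\<in>{..<2*n}. x i + y i)"
    and "x \<in> square_set n A" "y \<in> square_set n B"
    unfolding minkowski_sum_def by auto
  then show "z \<in> square_set n (minkowski_sum n A B)"
    using split_coords_pointwise[of n "(+)" x y]
    by (auto simp: square_set_def minkowski_sum_def RN_def mem_Times_iff)
next
  fix z assume "z \<in> square_set n (minkowski_sum n A B)"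
  then obtain a a' b b' where z: "z \<in> RN (2*n)"
    and split_z: "split_coords n z = ((\<lambda>i\<in>{..<n}. a i + b i), (\<lambda>i\<in>{..<n}. a' i + b' i))"
    and ab: "a \<in> A" "a' \<in> A" "b \<in> B" "b' \<in> B"
    unfolding square_set_def minkowski_sum_def by (auto simp: mem_Times_iff prod_eq_iff)
  have ab_RN: "a \<in> RN n" "a' \<in> RN n" "b \<in> RN n" "b' \<in> RN n" using ab A B by auto
  let ?x = "join_coords n (a, a')" and ?y = "join_coords n (b, b')"
  have "split_coords n (\<lambda>i\<in>{..<2*n}. ?x i + ?y i) = split_coords n z"
    using split_coords_pointwise[of n "(+)" ?x ?y] ab_RN by (simp add: split_join_coords split_z)
  then have "z = (\<lambda>i\<in>{..<2*n}. ?x i + ?y i)"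
    using inj_onD[OF split_coords_inj_on] z by (fastforce simp: RN_def)
  moreover have "?x \<in> square_set n A" "?y \<in> square_set n B"
    using ab ab_RN by (simp_all add: square_set_def join_coords_RN split_join_coords)
  ultimately show "z \<in> minkowski_sum (2*n) (square_set n A) (square_set n B)"
    unfolding minkowski_sum_def by blast
qed

lemma gamma_square_set:
  "A \<in> sets (gauss n) \<Longrightarrow> gamma (2*n) (square_set n A) = gamma n A ^ 2"
  by (simp add: gamma_def measure_def emeasure_gauss_square_set power2_eq_square enn2real_mult)

fun iterated_square :: "nat \<Rightarrow> nat \<Rightarrow> (nat \<Rightarrow> real) set \<Rightarrow> (nat \<Rightarrow> real) set" where
  "iterated_square d 0 A = A"
| "iterated_square d (Suc k) A = square_set (2^k * d) (iterated_square d k A)"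

lemma power_Suc_mult_double: "2^Suc k * d = 2 * (2^k * (d::nat))"
  by simp

lemma iterated_square_RN: "A \<subseteq> RN d \<Longrightarrow> iterated_square d k A \<subseteq> RN (2^k * d)"
  by (cases k) (simp_all only: iterated_square.simps power_Suc_mult_double square_set_RN, simp)

lemma iterated_square_Int:
  "iterated_square d k (A \<inter> B) = iterated_square d k A \<inter> iterated_square d k B"
  by (induction k) (simp_all add: square_set_Int)

lemma convex_set_iterated_square:
  "convex_set d A \<Longrightarrow> convex_set (2^k * d) (iterated_square d k A)"
  by (induction k) (simp_all only: iterated_square.simps power_Suc_mult_double convex_set_square_set, simp)

lemma origin_symmetric_iterated_square:
  "origin_symmetric d A \<Longrightarrow> origin_symmetric (2^k * d) (iterated_square d k A)"
  by (induction k) (simp_all only: iterated_square.simps power_Suc_mult_double origin_symmetric_square_set, simp)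

lemma minkowski_sum_iterated_square:
  assumes "A \<subseteq> RN d" "B \<subseteq> RN d"
  shows "minkowski_sum (2^k * d) (iterated_square d k A) (iterated_square d k B)
           = iterated_square d k (minkowski_sum d A B)"
proof (induction k)
  case (Suc k)
  have "minkowski_sum (2^Suc k * d) (iterated_square d (Suc k) A) (iterated_square d (Suc k) B)
      = square_set (2^k * d) (minkowski_sum (2^k * d) (iterated_square d k A) (iterated_square d k B))"
    unfolding power_Suc_mult_double iterated_square.simps
    using assms by (intro minkowski_sum_square_set iterated_square_RN)
  then show ?case using Suc.IH by simp
qed simp

lemma
  assumes "A \<in> sets (gauss d)"
  shows sets_gauss_iterated_square: "iterated_square d k A \<in> sets (gauss (2^k * d))"
    and gamma_iterated_square: "gamma (2^k * d) (iterated_square d k A) = gamma d A ^ 2^k"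
proof (induction k)
  case (Suc k)
  { case 1 show ?case
      unfolding power_Suc_mult_double iterated_square.simps by (rule sets_gauss_square_set[OF Suc.IH(1)])
  next
    case 2
    have "gamma (2 * (2^k * d)) (square_set (2^k * d) (iterated_square d k A)) = (gamma d A ^ 2^k)^2"
      by (simp only: gamma_square_set[OF Suc.IH(1)] Suc.IH(2))
    then show ?case
      unfolding power_Suc_mult_double iterated_square.simps
      by (simp add: power_mult[symmetric] mult.commute)
  }
qed (use assms in simp_all)

subsection \<open>Removing the constant\<close>

lemma powr_root_mult_le_of_power_le:
  fixes X Q c :: real
  assumes "0 \<le> X" "0 \<le> Q" "0 < c" "0 < M" "c * Q^M \<le> X^M"
  shows "c powr (1 / M) * Q \<le> X"
proof -
  have "(c powr (1 / M))^M = c"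
    using assms by (simp add: powr_realpow[symmetric] powr_powr)
  then have "(c powr (1 / M) * Q)^M \<le> X^M"
    using assms by (simp add: power_mult_distrib)
  then show ?thesis
    using assms by simp
qed

lemma le_of_power_bounds_along_doubling:
  fixes X Q :: real and c :: "nat \<Rightarrow> real"
  assumes "0 \<le> X" "0 \<le> Q" "d \<ge> 1"
    and c_pos: "\<And>k. 0 < c (2^k * d)"
    and lim: "(\<lambda>N. c N powr (1 / real N)) \<longlonglongrightarrow> 1"
    and bound: "\<And>k. c (2^k * d) * Q^2^k \<le> X^2^k"
  shows "Q \<le> X"
proof -
  let ?N = "\<lambda>k. 2^k * d"
  have root_eq: "(c (?N k) powr (1 / ?N k)) powr d = c (?N k) powr (1 / 2^k)" for k
    using \<open>d \<ge> 1\<close> by (simp add: powr_powr)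
  have "strict_mono ?N"
    using \<open>d \<ge> 1\<close> by (intro strict_monoI_Suc) simp
  then have "(\<lambda>k. c (?N k) powr (1 / ?N k)) \<longlonglongrightarrow> 1"
    by (rule LIMSEQ_subseq_LIMSEQ[OF lim, unfolded comp_def])
  then have "(\<lambda>k. (c (?N k) powr (1 / ?N k)) powr d) \<longlonglongrightarrow> 1 powr d"
    by (rule tendsto_powr) auto
  then have "(\<lambda>k. c (?N k) powr (1 / 2^k) * Q) \<longlonglongrightarrow> 1 * Q"
    unfolding root_eq by (intro tendsto_mult tendsto_const) simp
  moreover have "c (?N k) powr (1 / 2^k) * Q \<le> X" for k
    using powr_root_mult_le_of_power_le[OF assms(1,2) c_pos _ bound] by simp
  ultimately show ?thesis
    by (intro LIMSEQ_le_const2) auto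
qed

lemma power_bound_from_iterated_squares:
  fixes c :: "nat \<Rightarrow> real"
  assumes hyp: "\<forall>N\<ge>1. \<forall>K T. convex_set N K \<and> origin_symmetric N K \<and>
                 convex_set N T \<and> origin_symmetric N T \<longrightarrow>
                 gamma N (minkowski_sum N K T) * gamma N (K \<inter> T) \<ge> c N * gamma N K * gamma N T"
    and "d \<ge> 1"
    and K: "convex_set d K" "origin_symmetric d K" "K \<in> sets (gauss d)"
    and T: "convex_set d T" "origin_symmetric d T" "T \<in> sets (gauss d)"
    and sets: "minkowski_sum d K T \<in> sets (gauss d)" "K \<inter> T \<in> sets (gauss d)"
  shows "c (2^k * d) * (gamma d K * gamma d T)^2^k
           \<le> (gamma d (minkowski_sum d K T) * gamma d (K \<inter> T))^2^k"
proof -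
  have "K \<subseteq> RN d" "T \<subseteq> RN d" using K(1) T(1) by (auto simp: convex_set_def)
  then show ?thesis
    using hyp[rule_format, of "2^k * d" "iterated_square d k K" "iterated_square d k T"] \<open>d \<ge> 1\<close>
      K T sets convex_set_iterated_square origin_symmetric_iterated_square
    by (simp add: minkowski_sum_iterated_square iterated_square_Int[symmetric]
                  gamma_iterated_square power_mult_distrib mult.assoc)
qed

theorem theorem1p6:
  fixes c :: "nat \<Rightarrow> real"
  assumes pos: "\<forall>N\<ge>1. c N > 0"
    and lim: "(\<lambda>N. c N powr (1 / real N)) \<longlonglongrightarrow> 1"
    and hyp: "\<forall>N\<ge>1. \<forall>K T. convex_set N K \<and> origin_symmetric N K \<and>
                 convex_set N T \<and> origin_symmetric N T \<longrightarrow>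
                 gamma N (minkowski_sum N K T) * gamma N (K \<inter> T) \<ge> c N * gamma N K * gamma N T"
    and d: "d \<ge> 1"
    and K: "convex_set d K" "origin_symmetric d K"
    and T: "convex_set d T" "origin_symmetric d T"
  shows "gamma d (minkowski_sum d K T) * gamma d (K \<inter> T) \<ge> gamma d K * gamma d T"
proof -
  let ?X = "gamma d (minkowski_sum d K T) * gamma d (K \<inter> T)"
  let ?Q = "gamma d K * gamma d T"
  have nonneg: "0 \<le> ?X" "0 \<le> ?Q" by (simp_all add: gamma_def)
  show ?thesis
  proof (cases "K \<in> sets (gauss d) \<and> T \<in> sets (gauss d) \<and>
                minkowski_sum d K T \<in> sets (gauss d) \<and> K \<inter> T \<in> sets (gauss d)")
    case True
    then show ?thesis
      using le_of_power_bounds_along_doubling[OF nonneg d _ lim]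
        power_bound_from_iterated_squares[OF hyp d K _ T] pos d by simp
  next
    case False
    \<comment> \<open>a non-measurable set has measure 0, so the hypothesis in dimension d suffices\<close>
    then have "?X = 0 \<or> ?Q = 0" by (auto simp: gamma_def measure_notin_sets)
    moreover have "c d * ?Q \<le> ?X" using hyp d K T by (auto simp: mult.assoc)
    ultimately show ?thesis using nonneg pos d by (auto simp: mult_le_0_iff)
  qed
qed

end
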